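(* Let $p\ge 1$, $n_1,\dots,n_p\ge 1$, $n=n_1+\dots+n_p$, and let $A\in\mathcal{B}'(p)$ (defined in the context), with diagonal blocks $A_{k,k}$ ($k=1,\dots,p$). Then: (1) $A\succeq 0$ if and only if $\phi(A)\succeq 0$ and $A_{k,k}\succeq 0$ for every $k\in\{1,\dots,p\}$. (2) $A\succ 0$ if and only if $\phi(A)\succ 0$ and $A_{k,k}\succ 0$ for every $k\in\{1,\dots,p\}$.
   Context: All matrices are real. $M\succeq 0$ means $M$ is symmetric positive semidefinite, $M\succ 0$ means symmetric positive definite. $J_{m}$ is the $m\times m$ matrix of ones and $J_{m,q}=\mathbf 1_m\mathbf 1_q^\top$ the $m\times q$ matrix of ones. For a square matrix $C$ of size $m$, $\overline{C}=m^{-2}\mathbf 1_m^\top C\mathbf 1_m$ denotes the average of its entries. Given block sizes $n_1,\dots,n_p$, index the rows/columns of an $n\times n$ matrix ($n=\sum n_k$) by groups $G_1,\dots,G_p$, where $G_1$ consists of the first $n_1$ indices, $G_2$ the next $n_2$, etc., and write the matrix in block form $A=(A_{k,\ell})_{1\le k,\ell\le p}$ with $A_{k,\ell}$ of size $n_k\times n_\ell$. $\mathcal{B}'(p)$ is the set of real symmetric $n\times n$ block matrices $A$ such that every off-diagonal block is constant, i.e. $A_{k,\ell}=c_{k,\ell}J_{n_k,n_\ell}$ for some real $c_{k,\ell}$ ($k\neq\ell$), and every diagonal block satisfies $A_{k,k}-\overline{A_{k,k}}\,J_{n_k}\succeq 0$. The block average map $\phi$ sends $A$ to the $p\times p$ matrix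 $[\phi(A)]_{k,\ell}=\frac{1}{n_kn_\ell}\sum_{i\in G_k,\,j\in G_\ell}A_{i,j}$. *)

theory Defs
  imports "Jordan_Normal_Form.Matrix"
begin

definition psd :: "real mat \<Rightarrow> bool" where
  "psd M \<longleftrightarrow> M \<in> carrier_mat (dim_row M) (dim_row M) \<and> transpose_mat M = M \<and>
     (\<forall>v \<in> carrier_vec (dim_row M). v \<bullet> (M *\<^sub>v v) \<ge> 0)"

definition pd :: "real mat \<Rightarrow> bool" where
  "pd M \<longleftrightarrow> M \<in> carrier_mat (dim_row M) (dim_row M) \<and> transpose_mat M = M \<and>
     (\<forall>v \<in> carrier_vec (dim_row M). v \<noteq> 0\<^sub>v (dim_row M) \<longrightarrow> v \<bullet> (M *\<^sub>v v) > 0)"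

definition ones_mat :: "nat \<Rightarrow> nat \<Rightarrow> real mat" where
  "ones_mat m q = mat m q (\<lambda>_. 1)"

definition mat_avg :: "real mat \<Rightarrow> real" where
  "mat_avg C = (\<Sum>i<dim_row C. \<Sum>j<dim_row C. C $$ (i, j)) / (real (dim_row C))^2"

(* block sizes ns = [n_1,...,n_p]; group G_k (0-based k) starts at offset
   n_1 + ... + n_k *)
definition blk_off :: "nat list \<Rightarrow> nat \<Rightarrow> nat" where
  "blk_off ns k = sum_list (take k ns)"

definition blk :: "nat list \<Rightarrow> real mat \<Rightarrow> nat \<Rightarrow> nat \<Rightarrow> real mat" where
  "blk ns A k l = mat (ns ! k) (ns ! l) (\<lambda>(i, j). A $$ (blk_off ns k + i, blk_off ns l + j))"

definition phi :: "nat list \<Rightarrow> real mat \<Rightarrow> real mat" where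
  "phi ns A = mat (length ns) (length ns) (\<lambda>(k, l).
     (\<Sum>i<ns ! k. \<Sum>j<ns ! l. A $$ (blk_off ns k + i, blk_off ns l + j)) / (real (ns ! k) * real (ns ! l)))"

definition Bprime :: "nat list \<Rightarrow> real mat \<Rightarrow> bool" where
  "Bprime ns A \<longleftrightarrow> A \<in> carrier_mat (sum_list ns) (sum_list ns) \<and> transpose_mat A = A \<and>
     (\<forall>k < length ns. \<forall>l < length ns. k \<noteq> l \<longrightarrow>
        (\<exists>c. blk ns A k l = c \<cdot>\<^sub>m ones_mat (ns ! k) (ns ! l))) \<and>
     (\<forall>k < length ns. psd (blk ns A k k - mat_avg (blk ns A k k) \<cdot>\<^sub>m ones_mat (ns ! k) (ns ! k)))"

end

theory Submission
  imports Defs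
begin

text \<open>
  Write \<open>w\<^sub>k\<close> for the part of \<open>w\<close> indexed by \<open>G\<^sub>k\<close>, \<open>s\<^sub>k\<close> for the sum of its entries
  and \<open>C\<^sub>k = A\<^sub>k\<^sub>,\<^sub>k - \<phi>(A)\<^sub>k\<^sub>,\<^sub>k J\<close> for the centred diagonal blocks. Since the
  off-diagonal blocks are constant, the quadratic form of \<open>A\<close> splits as
  \<open>w\<^sup>T A w = s\<^sup>T \<phi>(A) s + \<Sum>\<^sub>k w\<^sub>k\<^sup>T C\<^sub>k w\<^sub>k\<close>, and each \<open>C\<^sub>k\<close> is positive semidefinite by
  assumption. Vectors constant on every group make the second term vanish, so they transfer
  (semi)definiteness from \<open>A\<close> to \<open>\<phi>(A)\<close>; vectors supported on one group only see \<open>A\<^sub>k\<^sub>,\<^sub>k\<close>.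
  Conversely \<open>\<phi>(A) \<succeq> 0\<close> alone gives \<open>A \<succeq> 0\<close>; for definiteness, a vector with all
  \<open>s\<^sub>k = 0\<close> has \<open>w\<^sub>k\<^sup>T C\<^sub>k w\<^sub>k = w\<^sub>k\<^sup>T A\<^sub>k\<^sub>,\<^sub>k w\<^sub>k\<close>, which is where \<open>A\<^sub>k\<^sub>,\<^sub>k \<succ> 0\<close> is needed.
\<close>

definition quad_form :: "real mat \<Rightarrow> (nat \<Rightarrow> real) \<Rightarrow> real" where
  "quad_form M h = (\<Sum>i<dim_row M. \<Sum>j<dim_row M. h i * M $$ (i, j) * h j)"

lemma quad_form_cong:
  "(\<And>i. i < dim_row M \<Longrightarrow> h i = h' i) \<Longrightarrow> quad_form M h = quad_form M h'"
  unfolding quad_form_def by (intro sum.cong) auto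

lemma scalar_prod_mult_mat_vec_eq_quad_form:
  assumes "M \<in> carrier_mat m m" "v \<in> carrier_vec m"
  shows "v \<bullet> (M *\<^sub>v v) = quad_form M (\<lambda>i. v $ i)"
  using assms
  by (auto simp: quad_form_def scalar_prod_def row_def sum_distrib_left atLeast0LessThan
      mult.assoc intro!: sum.cong)

lemma symmetric_mat_iff:
  assumes "M \<in> carrier_mat m m"
  shows "transpose_mat M = M \<longleftrightarrow> (\<forall>i<m. \<forall>j<m. M $$ (i, j) = M $$ (j, i))"
proof
  show "transpose_mat M = M \<Longrightarrow> \<forall>i<m. \<forall>j<m. M $$ (i, j) = M $$ (j, i)"
    using assms by (metis carrier_matD index_transpose_mat(1))
  show "\<forall>i<m. \<forall>j<m. M $$ (i, j) = M $$ (j, i) \<Longrightarrow> transpose_mat M = M"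
    using assms by (intro eq_matI) auto
qed

lemma quad_form_vec:
  "M \<in> carrier_mat m m \<Longrightarrow> quad_form M h = vec m h \<bullet> (M *\<^sub>v vec m h)"
  by (subst scalar_prod_mult_mat_vec_eq_quad_form[of _ m]) (auto intro: quad_form_cong)

lemma psd_iff_quad_form:
  "psd M \<longleftrightarrow> M \<in> carrier_mat (dim_row M) (dim_row M) \<and> transpose_mat M = M \<and>
     (\<forall>h. quad_form M h \<ge> 0)"
  unfolding psd_def
  by (metis quad_form_vec vec_carrier scalar_prod_mult_mat_vec_eq_quad_form)

lemma pd_iff_quad_form:
  "pd M \<longleftrightarrow> M \<in> carrier_mat (dim_row M) (dim_row M) \<and> transpose_mat M = M \<and>
     (\<forall>h. (\<exists>i<dim_row M. h i \<noteq> 0) \<longrightarrow> quad_form M h > 0)"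
proof -
  let ?m = "dim_row M"
  have "(\<forall>v \<in> carrier_vec ?m. v \<noteq> 0\<^sub>v ?m \<longrightarrow> v \<bullet> (M *\<^sub>v v) > 0) \<longleftrightarrow>
      (\<forall>h. (\<exists>i<?m. h i \<noteq> 0) \<longrightarrow> quad_form M h > 0)"
    if sq: "M \<in> carrier_mat ?m ?m"
  proof (intro iffI allI ballI impI)
    fix h :: "nat \<Rightarrow> real"
    assume "\<forall>v \<in> carrier_vec ?m. v \<noteq> 0\<^sub>v ?m \<longrightarrow> v \<bullet> (M *\<^sub>v v) > 0"
      and "\<exists>i<?m. h i \<noteq> 0"
    then show "quad_form M h > 0"
      by (metis quad_form_vec[OF sq] vec_carrier index_vec index_zero_vec(1))
  next
    fix v :: "real vec"
    assume H: "\<forall>h. (\<exists>i<?m. h i \<noteq> 0) \<longrightarrow> quad_form M h > 0"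
      and v: "v \<in> carrier_vec ?m" "v \<noteq> 0\<^sub>v ?m"
    then have "\<exists>i<?m. v $ i \<noteq> 0" by auto
    with H v show "v \<bullet> (M *\<^sub>v v) > 0"
      by (simp add: scalar_prod_mult_mat_vec_eq_quad_form[OF sq])
  qed
  then show ?thesis unfolding pd_def by blast
qed

lemma quad_form_minus_smult_ones:
  assumes "M \<in> carrier_mat m m"
  shows "quad_form (M - c \<cdot>\<^sub>m ones_mat m m) h = quad_form M h - c * (\<Sum>i<m. h i)\<^sup>2"
proof -
  have "quad_form (M - c \<cdot>\<^sub>m ones_mat m m) h = (\<Sum>i<m. \<Sum>j<m. h i * M $$ (i, j) * h j - c * (h i * h j))"
    using assms unfolding quad_form_def by (intro sum.cong) (auto simp: ones_mat_def algebra_simps)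
  also have "\<dots> = quad_form M h - (\<Sum>i<m. \<Sum>j<m. c * (h i * h j))"
    using assms by (simp add: quad_form_def sum_subtractf)
  also have "(\<Sum>i<m. \<Sum>j<m. c * (h i * h j)) = c * (\<Sum>i<m. h i)\<^sup>2"
    unfolding power2_eq_square sum_distrib_right sum_distrib_left
    by (subst sum.swap) (simp add: mult.commute)
  finally show ?thesis .
qed

lemma quad_form_centered_const:
  assumes "M \<in> carrier_mat m m"
  shows "quad_form (M - mat_avg M \<cdot>\<^sub>m ones_mat m m) (\<lambda>_. c) = 0"
proof -
  let ?S = "\<Sum>i<m. \<Sum>j<m. M $$ (i, j)"
  have "quad_form (M - mat_avg M \<cdot>\<^sub>m ones_mat m m) (\<lambda>_. c) = c\<^sup>2 * ?S - ?S / m\<^sup>2 * (m * c)\<^sup>2"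
    unfolding quad_form_minus_smult_ones[OF assms] using assms
    by (simp add: quad_form_def mat_avg_def sum_distrib_left power2_eq_square mult_ac)
  also have "\<dots> = 0"
    by (cases "m = 0") (simp_all add: power_mult_distrib)
  finally show ?thesis .
qed

lemma blk_off_Suc: "k < length ns \<Longrightarrow> blk_off ns (Suc k) = blk_off ns k + ns ! k"
  by (simp add: blk_off_def take_Suc_conv_app_nth)

lemma blk_off_mono: "k \<le> l \<Longrightarrow> blk_off ns k \<le> blk_off ns l"
  unfolding blk_off_def by (metis le_add_diff_inverse le_add1 sum_list_append take_add)

lemma blk_off_add_less_sum_list:
  "k < length ns \<Longrightarrow> a < ns ! k \<Longrightarrow> blk_off ns k + a < sum_list ns"
  using blk_off_Suc[of k ns] blk_off_mono[of "Suc k" "length ns" ns]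
  by (simp add: blk_off_def)

lemma blk_off_add_inj:
  assumes "k < length ns" "l < length ns" "a < ns ! k" "b < ns ! l"
    and "blk_off ns k + a = blk_off ns l + b"
  shows "k = l" "a = b"
proof -
  have "\<not> k < l" using blk_off_Suc[of k ns] blk_off_mono[of "Suc k" l ns] assms by linarith
  moreover have "\<not> l < k" using blk_off_Suc[of l ns] blk_off_mono[of "Suc l" k ns] assms by linarith
  ultimately show "k = l" by simp
  with assms(5) show "a = b" by simp
qed

lemma sum_lessThan_add: "(\<Sum>i<a + m. f i) = (\<Sum>i<a. f i) + (\<Sum>j<m. f (a + j :: nat))"
  by (induct m) (auto simp: add.assoc)

lemma sum_lessThan_sum_list_blocks:
  "(\<Sum>i<sum_list ns. f i) = (\<Sum>k<length ns. \<Sum>a<ns ! k. f (blk_off ns k + a))"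
proof (induct ns rule: rev_induct)
  case (snoc m ns)
  have "(\<Sum>k<length ns. \<Sum>a<(ns @ [m]) ! k. f (blk_off (ns @ [m]) k + a))
      = (\<Sum>k<length ns. \<Sum>a<ns ! k. f (blk_off ns k + a))"
    by (intro sum.cong) (auto simp: nth_append blk_off_def)
  moreover have "blk_off (ns @ [m]) (length ns) = sum_list ns" by (simp add: blk_off_def)
  ultimately show ?case using snoc by (simp add: sum_lessThan_add)
qed simp

lemma ex_blk_nonzero:
  assumes "i < sum_list ns" "w i \<noteq> (0::real)"
  obtains k a where "k < length ns" "a < ns ! k" "w (blk_off ns k + a) \<noteq> 0"
proof -
  have "(\<Sum>i<sum_list ns. (w i)\<^sup>2) > 0" using assms by (intro sum_pos2[of _ i]) auto
  then have "\<exists>k<length ns. \<exists>a<ns ! k. w (blk_off ns k + a) \<noteq> 0"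
    unfolding sum_lessThan_sum_list_blocks by (metis (no_types, lifting) lessThan_iff
        power_zero_numeral sum.neutral less_irrefl)
  with that show ?thesis by blast
qed

lemma sum_if_const_cond: "(\<Sum>x\<in>A. if P then f x else 0) = (if P then sum f A else 0)"
  by simp

definition blk_vec :: "nat list \<Rightarrow> (nat \<Rightarrow> nat \<Rightarrow> real) \<Rightarrow> nat \<Rightarrow> real" where
  "blk_vec ns G i = (\<Sum>k<length ns. \<Sum>a<ns ! k. if i = blk_off ns k + a then G k a else 0)"

lemma blk_vec_blk_off:
  assumes "k < length ns" "a < ns ! k"
  shows "blk_vec ns G (blk_off ns k + a) = G k a"
proof -
  have "blk_vec ns G (blk_off ns k + a) =
      (\<Sum>l<length ns. \<Sum>b<ns ! l. if l = k \<and> b = a then G l b else 0)"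
    unfolding blk_vec_def using blk_off_add_inj[OF assms(1) _ assms(2)]
    by (intro sum.cong refl) auto
  also have "\<dots> = G k a"
    using assms by (simp add: if_if_eq_conj[symmetric] sum_if_const_cond cong: if_cong)
  finally show ?thesis .
qed

lemma quad_form_blocks:
  assumes "dim_row A = sum_list ns"
  shows "quad_form A w = (\<Sum>k<length ns. \<Sum>l<length ns. \<Sum>a<ns ! k. \<Sum>b<ns ! l.
           w (blk_off ns k + a) * A $$ (blk_off ns k + a, blk_off ns l + b) * w (blk_off ns l + b))"
  unfolding quad_form_def assms sum_lessThan_sum_list_blocks[where ns = ns]
  by (rule sum.cong[OF refl]) (rule sum.swap)

definition centered_blk :: "nat list \<Rightarrow> real mat \<Rightarrow> nat \<Rightarrow> real mat" where
  "centered_blk ns A k = blk ns A k k - mat_avg (blk ns A k k) \<cdot>\<^sub>m ones_mat (ns ! k) (ns ! k)"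

definition blk_sums :: "nat list \<Rightarrow> (nat \<Rightarrow> real) \<Rightarrow> nat \<Rightarrow> real" where
  "blk_sums ns w k = (\<Sum>a<ns ! k. w (blk_off ns k + a))"

lemma blk_carrier: "blk ns A k l \<in> carrier_mat (ns ! k) (ns ! l)"
  by (simp add: blk_def)

lemma phi_carrier: "phi ns A \<in> carrier_mat (length ns) (length ns)"
  by (simp add: phi_def)

lemma dim_row_phi [simp]: "dim_row (phi ns A) = length ns"
  by (simp add: phi_def)

lemma dim_row_centered_blk [simp]: "dim_row (centered_blk ns A k) = ns ! k"
  by (simp add: centered_blk_def ones_mat_def)

lemma Bprime_carrier: "Bprime ns A \<Longrightarrow> A \<in> carrier_mat (sum_list ns) (sum_list ns)"
  by (simp add: Bprime_def)

lemma Bprime_dim_row: "Bprime ns A \<Longrightarrow> dim_row A = sum_list ns"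
  using Bprime_carrier by blast

lemma Bprime_symmetric: "Bprime ns A \<Longrightarrow> transpose_mat A = A"
  by (simp add: Bprime_def)

lemma mat_avg_blk_eq_phi: "k < length ns \<Longrightarrow> mat_avg (blk ns A k k) = phi ns A $$ (k, k)"
  by (simp add: mat_avg_def phi_def blk_def power2_eq_square)

lemma Bprime_entry:
  assumes "Bprime ns A" "\<forall>k < length ns. ns ! k \<ge> 1"
    and "k < length ns" "l < length ns" "a < ns ! k" "b < ns ! l"
  shows "A $$ (blk_off ns k + a, blk_off ns l + b) =
    phi ns A $$ (k, l) + (if k = l then centered_blk ns A k $$ (a, b) else 0)"
proof (cases "k = l")
  case True
  then show ?thesis
    using assms by (simp add: centered_blk_def mat_avg_blk_eq_phi) (simp add: blk_def ones_mat_def)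
next
  case False
  then obtain c where c: "blk ns A k l = c \<cdot>\<^sub>m ones_mat (ns ! k) (ns ! l)"
    using assms unfolding Bprime_def by blast
  have const: "A $$ (blk_off ns k + i, blk_off ns l + j) = c" if "i < ns ! k" "j < ns ! l" for i j
  proof -
    have "blk ns A k l $$ (i, j) = c" using c that by (simp add: ones_mat_def)
    then show ?thesis using that by (simp add: blk_def)
  qed
  have "phi ns A $$ (k, l) = (\<Sum>i<ns ! k. \<Sum>j<ns ! l. c) / (real (ns ! k) * real (ns ! l))"
    using assms by (simp add: phi_def const)
  also have "\<dots> = c" using assms by simp
  finally show ?thesis using False const assms by simp
qed

lemma quad_form_Bprime:
  assumes B: "Bprime ns A" and pos: "\<forall>k < length ns. ns ! k \<ge> 1"
  shows "quad_form A w = quad_form (phi ns A) (blk_sums ns w)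
    + (\<Sum>k<length ns. quad_form (centered_blk ns A k) (\<lambda>a. w (blk_off ns k + a)))"
proof -
  let ?g = "\<lambda>k a. w (blk_off ns k + a)"
  have "quad_form A w = (\<Sum>k<length ns. \<Sum>l<length ns. \<Sum>a<ns ! k. \<Sum>b<ns ! l.
      ?g k a * A $$ (blk_off ns k + a, blk_off ns l + b) * ?g l b)"
    by (rule quad_form_blocks[OF Bprime_dim_row[OF B]])
  also have "\<dots> = (\<Sum>k<length ns. \<Sum>l<length ns. \<Sum>a<ns ! k. \<Sum>b<ns ! l.
      ?g k a * phi ns A $$ (k, l) * ?g l b)
    + (\<Sum>k<length ns. \<Sum>l<length ns. \<Sum>a<ns ! k. \<Sum>b<ns ! l.
      if k = l then ?g k a * centered_blk ns A k $$ (a, b) * ?g k b else 0)"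
    unfolding sum.distrib[symmetric]
    by (intro sum.cong refl) (subst Bprime_entry[OF B pos], auto simp: algebra_simps)
  also have "(\<Sum>k<length ns. \<Sum>l<length ns. \<Sum>a<ns ! k. \<Sum>b<ns ! l.
      ?g k a * phi ns A $$ (k, l) * ?g l b) = quad_form (phi ns A) (blk_sums ns w)"
    unfolding quad_form_def blk_sums_def dim_row_phi
    by (intro sum.cong refl) (simp only: sum_distrib_left sum_distrib_right, rule sum.swap)
  also have "(\<Sum>k<length ns. \<Sum>l<length ns. \<Sum>a<ns ! k. \<Sum>b<ns ! l.
      if k = l then ?g k a * centered_blk ns A k $$ (a, b) * ?g k b else 0)
    = (\<Sum>k<length ns. quad_form (centered_blk ns A k) (?g k))"
    by (simp add: sum_if_const_cond quad_form_def)
  finally show ?thesis .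
qed

lemma quad_form_blk_vec_diag:
  assumes "dim_row A = sum_list ns" "k < length ns"
  shows "quad_form A (blk_vec ns (\<lambda>l a. if l = k then h a else 0)) = quad_form (blk ns A k k) h"
proof -
  have "quad_form A (blk_vec ns (\<lambda>l a. if l = k then h a else 0)) =
      (\<Sum>k'<length ns. \<Sum>l<length ns. \<Sum>a<ns ! k'. \<Sum>b<ns ! l.
        if k' = k then if l = k then h a * A $$ (blk_off ns k' + a, blk_off ns l + b) * h b else 0 else 0)"
    unfolding quad_form_blocks[OF assms(1)] by (intro sum.cong refl) (simp add: blk_vec_blk_off)
  also have "\<dots> = quad_form (blk ns A k k) h"
    using assms(2) by (simp add: sum_if_const_cond quad_form_def blk_def cong: if_cong)
  finally show ?thesis .
qed

lemma quad_form_blk_vec_const: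
  assumes B: "Bprime ns A" and pos: "\<forall>k < length ns. ns ! k \<ge> 1"
  shows "quad_form A (blk_vec ns (\<lambda>k a. h k / real (ns ! k))) = quad_form (phi ns A) h"
proof -
  let ?w = "blk_vec ns (\<lambda>k a. h k / real (ns ! k))"
  have "quad_form (centered_blk ns A k) (\<lambda>a. ?w (blk_off ns k + a)) = 0" if "k < length ns" for k
  proof -
    have "quad_form (centered_blk ns A k) (\<lambda>a. ?w (blk_off ns k + a)) =
        quad_form (centered_blk ns A k) (\<lambda>_. h k / real (ns ! k))"
      using that by (intro quad_form_cong) (simp add: blk_vec_blk_off)
    then show ?thesis
      unfolding centered_blk_def by (simp add: quad_form_centered_const[OF blk_carrier])
  qed
  moreover have "quad_form (phi ns A) (blk_sums ns ?w) = quad_form (phi ns A) h"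
  proof (intro quad_form_cong)
    fix k assume "k < dim_row (phi ns A)"
    moreover from this have "ns ! k \<noteq> 0" using pos by fastforce
    ultimately show "blk_sums ns ?w k = h k" by (simp add: blk_sums_def blk_vec_blk_off)
  qed
  ultimately show ?thesis by (simp add: quad_form_Bprime[OF B pos])
qed

lemma symmetric_blk_diag:
  assumes "A \<in> carrier_mat (sum_list ns) (sum_list ns)" "transpose_mat A = A" "k < length ns"
  shows "transpose_mat (blk ns A k k) = blk ns A k k"
  using assms blk_off_add_less_sum_list[OF assms(3)]
  by (auto simp: symmetric_mat_iff[OF blk_carrier] blk_def symmetric_mat_iff[OF assms(1)])

lemma symmetric_phi:
  assumes "A \<in> carrier_mat (sum_list ns) (sum_list ns)" "transpose_mat A = A"
  shows "transpose_mat (phi ns A) = phi ns A"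
proof -
  have "(\<Sum>i<ns ! k. \<Sum>j<ns ! l. A $$ (blk_off ns k + i, blk_off ns l + j)) =
      (\<Sum>j<ns ! l. \<Sum>i<ns ! k. A $$ (blk_off ns l + j, blk_off ns k + i))"
    if "k < length ns" "l < length ns" for k l
    using assms that blk_off_add_less_sum_list
    by (subst sum.swap) (intro sum.cong refl, auto simp: symmetric_mat_iff[OF assms(1)])
  then show ?thesis by (auto simp: symmetric_mat_iff[OF phi_carrier] phi_def mult.commute)
qed

lemma psd_blk_diag_if_psd:
  assumes "psd A" "dim_row A = sum_list ns" "k < length ns"
  shows "psd (blk ns A k k)"
  unfolding psd_iff_quad_form
proof (intro conjI allI)
  show "blk ns A k k \<in> carrier_mat (dim_row (blk ns A k k)) (dim_row (blk ns A k k))"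
    by (simp add: blk_def)
  show "transpose_mat (blk ns A k k) = blk ns A k k"
    using assms by (intro symmetric_blk_diag) (auto simp: psd_iff_quad_form)
  show "quad_form (blk ns A k k) h \<ge> 0" for h
    using assms(1) quad_form_blk_vec_diag[OF assms(2,3), symmetric] by (simp add: psd_iff_quad_form)
qed

lemma pd_blk_diag_if_pd:
  assumes "pd A" "dim_row A = sum_list ns" "k < length ns"
  shows "pd (blk ns A k k)"
  unfolding pd_iff_quad_form
proof (intro conjI allI impI)
  show "blk ns A k k \<in> carrier_mat (dim_row (blk ns A k k)) (dim_row (blk ns A k k))"
    by (simp add: blk_def)
  show "transpose_mat (blk ns A k k) = blk ns A k k"
    using assms by (intro symmetric_blk_diag) (auto simp: pd_iff_quad_form)
  fix h :: "nat \<Rightarrow> real" assume "\<exists>a<dim_row (blk ns A k k). h a \<noteq> 0"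
  then obtain a where a: "a < ns ! k" "h a \<noteq> 0" by (auto simp: blk_def)
  let ?w = "blk_vec ns (\<lambda>l a. if l = k then h a else 0)"
  have "?w (blk_off ns k + a) \<noteq> 0" using a assms(3) by (simp add: blk_vec_blk_off)
  then have "quad_form A ?w > 0"
    using assms blk_off_add_less_sum_list[OF assms(3) a(1)] by (auto simp: pd_iff_quad_form)
  then show "quad_form (blk ns A k k) h > 0"
    using quad_form_blk_vec_diag[OF assms(2,3)] by simp
qed

lemma psd_phi_if_psd:
  assumes B: "Bprime ns A" and pos: "\<forall>k < length ns. ns ! k \<ge> 1" and "psd A"
  shows "psd (phi ns A)"
  unfolding psd_iff_quad_form
proof (intro conjI allI)
  show "phi ns A \<in> carrier_mat (dim_row (phi ns A)) (dim_row (phi ns A))"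
    by (simp add: phi_carrier)
  show "transpose_mat (phi ns A) = phi ns A"
    using B by (intro symmetric_phi Bprime_carrier Bprime_symmetric)
  show "quad_form (phi ns A) h \<ge> 0" for h
    using assms(3) quad_form_blk_vec_const[OF B pos, symmetric] by (simp add: psd_iff_quad_form)
qed

lemma pd_phi_if_pd:
  assumes B: "Bprime ns A" and pos: "\<forall>k < length ns. ns ! k \<ge> 1" and "pd A"
  shows "pd (phi ns A)"
  unfolding pd_iff_quad_form
proof (intro conjI allI impI)
  show "phi ns A \<in> carrier_mat (dim_row (phi ns A)) (dim_row (phi ns A))"
    by (simp add: phi_carrier)
  show "transpose_mat (phi ns A) = phi ns A"
    using B by (intro symmetric_phi Bprime_carrier Bprime_symmetric)
  fix h :: "nat \<Rightarrow> real" assume "\<exists>k<dim_row (phi ns A). h k \<noteq> 0"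
  then obtain k where k: "k < length ns" "h k \<noteq> 0" by auto
  let ?w = "blk_vec ns (\<lambda>k a. h k / real (ns ! k))"
  have nk: "0 < ns ! k" using pos k by auto
  have "?w (blk_off ns k + 0) \<noteq> 0"
    using blk_vec_blk_off[OF k(1) nk] k nk by simp
  moreover have "blk_off ns k + 0 < sum_list ns"
    by (rule blk_off_add_less_sum_list[OF k(1) nk])
  ultimately have "quad_form A ?w > 0"
    using assms(3) Bprime_dim_row[OF B] by (auto simp: pd_iff_quad_form)
  then show "quad_form (phi ns A) h > 0"
    by (simp add: quad_form_blk_vec_const[OF B pos])
qed

lemma psd_centered_blk: "Bprime ns A \<Longrightarrow> k < length ns \<Longrightarrow> psd (centered_blk ns A k)"
  by (simp add: Bprime_def centered_blk_def)

lemma psd_if_psd_phi: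
  assumes B: "Bprime ns A" and pos: "\<forall>k < length ns. ns ! k \<ge> 1" and "psd (phi ns A)"
  shows "psd A"
  unfolding psd_iff_quad_form
proof (intro conjI allI)
  show "A \<in> carrier_mat (dim_row A) (dim_row A)" "transpose_mat A = A"
    using Bprime_carrier[OF B] Bprime_dim_row[OF B] Bprime_symmetric[OF B] by simp_all
  fix w :: "nat \<Rightarrow> real"
  have "quad_form (phi ns A) (blk_sums ns w) \<ge> 0"
    using assms(3) by (simp add: psd_iff_quad_form)
  moreover have "quad_form (centered_blk ns A k) (\<lambda>a. w (blk_off ns k + a)) \<ge> 0"
    if "k < length ns" for k
    using psd_centered_blk[OF B that] by (simp add: psd_iff_quad_form)
  ultimately show "quad_form A w \<ge> 0"
    unfolding quad_form_Bprime[OF B pos] by (auto intro!: add_nonneg_nonneg sum_nonneg)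
qed

lemma pd_if_pd_phi_blk_diag:
  assumes B: "Bprime ns A" and pos: "\<forall>k < length ns. ns ! k \<ge> 1"
    and phi_pd: "pd (phi ns A)" and blk_pd: "\<forall>k < length ns. pd (blk ns A k k)"
  shows "pd A"
  unfolding pd_iff_quad_form
proof (intro conjI allI impI)
  show "A \<in> carrier_mat (dim_row A) (dim_row A)" "transpose_mat A = A"
    using Bprime_carrier[OF B] Bprime_dim_row[OF B] Bprime_symmetric[OF B] by simp_all
  fix w :: "nat \<Rightarrow> real" assume "\<exists>i<dim_row A. w i \<noteq> 0"
  then obtain k0 a0 where k0: "k0 < length ns" "a0 < ns ! k0" "w (blk_off ns k0 + a0) \<noteq> 0"
    using ex_blk_nonzero Bprime_dim_row[OF B] by metis
  let ?g = "\<lambda>k a. w (blk_off ns k + a)"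
  let ?C = "\<lambda>k. quad_form (centered_blk ns A k) (?g k)"
  have C_nonneg: "?C k \<ge> 0" if "k < length ns" for k
    using psd_centered_blk[OF B that] by (simp add: psd_iff_quad_form)
  show "quad_form A w > 0"
  proof (cases "\<exists>k < length ns. blk_sums ns w k \<noteq> 0")
    case True
    then have "quad_form (phi ns A) (blk_sums ns w) > 0"
      using phi_pd by (auto simp: pd_iff_quad_form phi_def)
    then show ?thesis
      using C_nonneg unfolding quad_form_Bprime[OF B pos] by (auto intro!: add_pos_nonneg sum_nonneg)
  next
    case False
    then have "quad_form (phi ns A) (blk_sums ns w) = quad_form (phi ns A) (\<lambda>_. 0)"
      by (intro quad_form_cong) (simp add: phi_def)
    then have phi_zero: "quad_form (phi ns A) (blk_sums ns w) = 0"
      by (simp add: quad_form_def)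
    have "?C k0 = quad_form (blk ns A k0 k0) (?g k0)"
      using False k0(1)
      by (simp add: centered_blk_def quad_form_minus_smult_ones[OF blk_carrier] blk_sums_def)
    also have "\<dots> > 0"
    proof -
      have "pd (blk ns A k0 k0)" using blk_pd k0(1) by blast
      moreover have "dim_row (blk ns A k0 k0) = ns ! k0" by (simp add: blk_def)
      ultimately show ?thesis
        using k0(2,3) unfolding pd_iff_quad_form by (metis (no_types, lifting))
    qed
    finally have "(\<Sum>k<length ns. ?C k) > 0"
      using C_nonneg k0(1) by (intro sum_pos2[where i = k0]) auto
    then show ?thesis unfolding quad_form_Bprime[OF B pos] phi_zero by simp
  qed
qed

theorem theorem1:
  fixes ns :: "nat list" and A :: "real mat"
  assumes "length ns \<ge> 1"
    and "\<forall>k < length ns. ns ! k \<ge> 1"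
    and "Bprime ns A"
  shows "(psd A \<longleftrightarrow> psd (phi ns A) \<and> (\<forall>k < length ns. psd (blk ns A k k)))
       \<and> (pd A \<longleftrightarrow> pd (phi ns A) \<and> (\<forall>k < length ns. pd (blk ns A k k)))"
proof -
  note dim = Bprime_dim_row[OF assms(3)]
  show ?thesis
    using psd_phi_if_psd[OF assms(3,2)] psd_blk_diag_if_psd[OF _ dim] psd_if_psd_phi[OF assms(3,2)]
      pd_phi_if_pd[OF assms(3,2)] pd_blk_diag_if_pd[OF _ dim] pd_if_pd_phi_blk_diag[OF assms(3,2)]
    by blast
qed

end
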